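(* Let $A\subset\mathbb{Z}$ be a set with $\dim(A)=1$ and cardinality $k$ that is composed of $s\le k-1$ pairwise disjoint segments $P_1,\dots,P_s$ with $\max P_i<\min P_{i+1}$ for $1\le i<s$. Suppose that every finite set $B\subset\mathbb{Z}$ with $\dim(B)=1$ whose minimum number of disjoint segments in a decomposition is $s-1\le |B|-1$ satisfies $\mathrm{vol}(B)\le 2^{s-2}(|B|-s+1)+1$. If $\mathrm{vol}(A)>2^{s-1}(|A|-s)+1$, then $P_i+P_j<P_i+P_{j+1}$ (i.e. every element of $P_i+P_j$ is smaller than every element of $P_i+P_{j+1}$) for all $1\le i\le s$ and $1\le j<s$.
   Context: A segment is a nonempty set of consecutive integers. Sets $A\subset G$, $B\subset G'$ in abelian groups are Freiman isomorphic of order 2 ($F_2$-isomorphic) if there is a bijection $\phi:A\to B$ with $x+y=z+t\iff\phi(x)+\phi(y)=\phi(z)+\phi(t)$ for all $x,y,z,t\in A$. The dimension $\dim(A)$ is the largest $d$ such that some $B\subset\mathbb{Z}^d$ not contained in a hyperplane is $F_2$-isomorphic to $A$. For a $1$-dimensional $A\subset\mathbb{Z}$, $\mathrm{vol}(A)=\max(\tilde A)+1$ where $\tilde A=(A-\min A)/\gcd(A-\min A)$ (in general the volume is the minimum number of lattice points in the convex hull of a $d$-dimensional $F_2$-isomorphic copy). *)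

theory Defs
  imports Complex_Main "HOL-Library.Function_Algebras"
begin

definition F2_iso :: "'a::plus set \<Rightarrow> 'b::plus set \<Rightarrow> bool" where
  "F2_iso A B \<longleftrightarrow> (\<exists>\<phi>. bij_betw \<phi> A B \<and>
     (\<forall>x\<in>A. \<forall>y\<in>A. \<forall>z\<in>A. \<forall>t\<in>A.
        x + y = z + t \<longleftrightarrow> \<phi> x + \<phi> y = \<phi> z + \<phi> t))"

text \<open>The lattice Z^d, represented as integer vectors indexed by nat vanishing
  from coordinate d on.\<close>
definition lattice :: "nat \<Rightarrow> (nat \<Rightarrow> int) set" where
  "lattice d = {v. \<forall>i\<ge>d. v i = 0}"

definition in_hyperplane :: "nat \<Rightarrow> (nat \<Rightarrow> int) set \<Rightarrow> bool" where
  "in_hyperplane d B \<longleftrightarrow> (\<exists>c :: nat \<Rightarrow> real. \<exists>b :: real. (\<exists>i<d. c i \<noteq> 0) \<and>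
     (\<forall>x\<in>B. (\<Sum>i<d. c i * real_of_int (x i)) = b))"

definition fdim :: "int set \<Rightarrow> nat" where
  "fdim A = (GREATEST d. \<exists>B. B \<subseteq> lattice d \<and> \<not> in_hyperplane d B \<and> F2_iso A B)"

text \<open>Volume of a 1-dimensional set of integers: max of the normalised set plus one.\<close>
definition vol1 :: "int set \<Rightarrow> int" where
  "vol1 A = (Max A - Min A) div Gcd ((\<lambda>a. a - Min A) ` A) + 1"

definition segment :: "int set \<Rightarrow> bool" where
  "segment P \<longleftrightarrow> (\<exists>a b. a \<le> b \<and> P = {a..b})"

definition seg_decomp :: "int set \<Rightarrow> nat \<Rightarrow> (nat \<Rightarrow> int set) \<Rightarrow> bool" where
  "seg_decomp A s P \<longleftrightarrow> (\<forall>i\<in>{1..s}. segment (P i)) \<and>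
     (\<forall>i\<in>{1..<s}. Max (P i) < Min (P (Suc i))) \<and>
     A = (\<Union>i\<in>{1..s}. P i)"

definition nsegs :: "int set \<Rightarrow> nat" where
  "nsegs A = (LEAST n. \<exists>P. seg_decomp A n P)"

end

theory Submission
  imports Defs
begin

text \<open>If some element of \<open>P i + P j\<close> is not below all of \<open>P i + P (j+1)\<close>, the gap
  \<open>g\<close> between \<open>P j\<close> and \<open>P (j+1)\<close> is at most the diameter of \<open>P i\<close>, hence at most
  \<open>|A| - s\<close>. Replace every segment \<open>[a, b]\<close> of \<open>A\<close> by \<open>[2a, 2b]\<close> and fill the gap
  between the \<open>j\<close>-th and the \<open>(j+1)\<close>-th one. Doubling keeps all other gaps open, also
  between adjacent segments of \<open>A\<close>, so the new set \<open>B\<close> has exactly \<open>s - 1\<close> segments;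
  moreover \<open>|B| \<le> 2|A| - s + 2g - 1\<close> and \<open>vol B = 2 vol A - 1\<close>. Finally \<open>dim B = 1\<close>:
  a Freiman isomorphism is affine along each segment of \<open>B\<close>, whose endpoints lie in the
  isomorphic copy \<open>2\<cdot>A\<close> of \<open>A\<close>, so a hyperplane containing the image of \<open>2\<cdot>A\<close>
  contains the image of \<open>B\<close>. The hypothesis applied to \<open>B\<close> then bounds \<open>vol A\<close> by
  \<open>2^(s-1) (|A| - s) + 1\<close>.\<close>

section \<open>Linear forms and hyperplanes\<close>

definition lin_form :: "nat \<Rightarrow> (nat \<Rightarrow> real) \<Rightarrow> (nat \<Rightarrow> int) \<Rightarrow> real" where
  "lin_form d c v = (\<Sum>i<d. c i * real_of_int (v i))"

lemma in_hyperplane_iff_lin_form: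
  "in_hyperplane d B \<longleftrightarrow> (\<exists>c b. (\<exists>i<d. c i \<noteq> 0) \<and> (\<forall>x\<in>B. lin_form d c x = b))"
  by (simp add: in_hyperplane_def lin_form_def)

lemma lin_form_add: "lin_form d c (v + w) = lin_form d c v + lin_form d c w"
  by (simp add: lin_form_def distrib_left sum.distrib)

lemma nonzero_functional_vanishing:
  fixes W :: "(nat \<Rightarrow> real) set"
  assumes "finite W" "card W < d"
  shows "\<exists>c. (\<exists>i<d. c i \<noteq> 0) \<and> (\<forall>w\<in>W. (\<Sum>i<d. c i * w i) = 0)"
  using assms
proof (induction d arbitrary: W)
  case 0
  then show ?case by simp
next
  case (Suc d)
  show ?case
  proof (cases "\<forall>w\<in>W. w d = 0")
    case True
    then show ?thesis
      by (intro exI[of _ "\<lambda>i. if i = d then 1 else 0"]) auto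
  next
    case False
    then obtain w0 where w0: "w0 \<in> W" "w0 d \<noteq> 0" by blast
    \<comment> \<open>Gaussian elimination of coordinate d against w0\<close>
    define red where "red u = (\<lambda>i. u i - (u d / w0 d) * w0 i)" for u :: "nat \<Rightarrow> real"
    have "card (red ` (W - {w0})) \<le> card (W - {w0})"
      using Suc.prems by (intro card_image_le) simp
    also have "\<dots> < d"
      using card_Diff1_less[OF Suc.prems(1) w0(1)] Suc.prems(2) by linarith
    finally obtain c' where c': "\<exists>i<d. c' i \<noteq> 0" "\<forall>w\<in>red ` (W - {w0}). (\<Sum>i<d. c' i * w i) = 0"
      using Suc.IH[of "red ` (W - {w0})"] Suc.prems by auto
    define S where "S = (\<Sum>i<d. c' i * w0 i)"
    define c where "c i = (if i < d then c' i else if i = d then - S / w0 d else 0)" for i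
    have c_sum: "(\<Sum>i<Suc d. c i * w i) = (\<Sum>i<d. c' i * w i) - S / w0 d * w d" for w
    proof -
      have "(\<Sum>i<d. c i * w i) = (\<Sum>i<d. c' i * w i)"
        by (rule sum.cong) (auto simp: c_def)
      then show ?thesis by (simp add: c_def)
    qed
    have "(\<Sum>i<Suc d. c i * w i) = 0" if w: "w \<in> W" for w
    proof (cases "w = w0")
      case True
      then show ?thesis unfolding c_sum using w0 by (simp add: S_def)
    next
      case False
      then have "(\<Sum>i<d. c' i * red w i) = 0" using c' w by auto
      then have "(\<Sum>i<d. c' i * w i) - (w d / w0 d) * S = 0"
        by (simp add: red_def S_def right_diff_distrib sum_subtractf sum_distrib_left algebra_simps)
      then have "(\<Sum>i<d. c' i * w i) - S / w0 d * w d = 0"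
        by (simp add: field_simps)
      then show ?thesis by (simp only: c_sum)
    qed
    moreover have "\<exists>i<Suc d. c i \<noteq> 0" using c' by (auto simp: c_def)
    ultimately show ?thesis by blast
  qed
qed

lemma in_hyperplane_if_card_le:
  assumes "finite Y" "0 < d" "card Y \<le> d"
  shows "in_hyperplane d Y"
proof (cases "Y = {}")
  case True
  then show ?thesis
    unfolding in_hyperplane_iff_lin_form using assms(2) by (intro exI[of _ "\<lambda>_. 1"]) auto
next
  case False
  then obtain y0 where y0: "y0 \<in> Y" by blast
  define W where "W = (\<lambda>y i. real_of_int (y i - y0 i)) ` (Y - {y0})"
  have "card W \<le> card (Y - {y0})"
    unfolding W_def by (rule card_image_le) (use assms(1) in simp)
  also have "\<dots> < d"
    using card_Diff1_less[OF assms(1) y0] assms(3) by linarith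
  finally obtain c where c: "\<exists>i<d. c i \<noteq> 0" "\<forall>w\<in>W. (\<Sum>i<d. c i * w i) = 0"
    using nonzero_functional_vanishing[of W d] assms(1) by (auto simp: W_def)
  have "lin_form d c y = lin_form d c y0" if "y \<in> Y" for y
  proof (cases "y = y0")
    case False
    then have "(\<Sum>i<d. c i * real_of_int (y i - y0 i)) = 0"
      using c(2) that by (auto simp: W_def)
    then show ?thesis
      by (simp add: lin_form_def right_diff_distrib sum_subtractf)
  qed simp
  then show ?thesis
    unfolding in_hyperplane_iff_lin_form using c(1) by blast
qed

lemma card_ge_if_not_in_hyperplane:
  assumes "finite Y" "\<not> in_hyperplane d Y"
  shows "d \<le> card Y"
  using in_hyperplane_if_card_le[OF assms(1), of d] assms(2) by linarith

section \<open>Freiman maps and sets of dimension one\<close>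

definition F2_map :: "('a::plus \<Rightarrow> 'b::plus) \<Rightarrow> 'a set \<Rightarrow> bool" where
  "F2_map \<phi> A \<longleftrightarrow> inj_on \<phi> A \<and>
     (\<forall>x\<in>A. \<forall>y\<in>A. \<forall>z\<in>A. \<forall>t\<in>A. x + y = z + t \<longleftrightarrow> \<phi> x + \<phi> y = \<phi> z + \<phi> t)"

lemma F2_iso_iff_F2_map: "F2_iso A B \<longleftrightarrow> (\<exists>\<phi>. F2_map \<phi> A \<and> \<phi> ` A = B)"
  by (auto simp: F2_iso_def F2_map_def bij_betw_def)

lemma F2_map_subset: "F2_map \<phi> B \<Longrightarrow> A \<subseteq> B \<Longrightarrow> F2_map \<phi> A"
  unfolding F2_map_def by (meson inj_on_subset subsetD)

lemma F2_map_comp: "F2_map \<phi> A \<Longrightarrow> F2_map \<psi> (\<phi> ` A) \<Longrightarrow> F2_map (\<psi> \<circ> \<phi>) A"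
  unfolding F2_map_def by (auto simp: comp_inj_on)

lemma F2_map_mult:
  fixes c :: "'a::idom"
  assumes "c \<noteq> 0"
  shows "F2_map (\<lambda>x. c * x) A"
proof -
  have "x + y = z + t \<longleftrightarrow> c * x + c * y = c * z + c * t" for x y z t :: 'a
    using assms by (simp flip: distrib_left)
  then show ?thesis
    using assms by (auto simp: F2_map_def inj_on_def)
qed

lemma F2_map_lattice_1:
  fixes B :: "int set"
  shows "F2_map (\<lambda>x i. if i = 0 then x else 0) B"
  by (auto simp: F2_map_def inj_on_def fun_eq_iff)

lemma in_hyperplane_if_fdim_eq_1:
  assumes "finite A" "fdim A = 1" "F2_iso A Y" "Y \<subseteq> lattice d" "2 \<le> d"
  shows "in_hyperplane d Y"
proof (rule ccontr)
  let ?embeds = "\<lambda>d. \<exists>Y. Y \<subseteq> lattice d \<and> \<not> in_hyperplane d Y \<and> F2_iso A Y"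
  assume "\<not> in_hyperplane d Y"
  then have "?embeds d" using assms(3,4) by auto
  moreover have "d' \<le> card A" if "?embeds d'" for d'
  proof -
    from that obtain Y' \<phi> where Y': "\<not> in_hyperplane d' Y'" "bij_betw \<phi> A Y'"
      unfolding F2_iso_def by blast
    have "finite Y'" "card Y' = card A"
      using assms(1) bij_betw_finite[OF Y'(2)] bij_betw_same_card[OF Y'(2)] by simp_all
    then show ?thesis
      using card_ge_if_not_in_hyperplane Y'(1) by metis
  qed
  ultimately have "d \<le> fdim A"
    unfolding fdim_def by (rule Greatest_le_nat)
  then show False using assms(2,5) by simp
qed

lemma fdim_eq_1I:
  fixes B :: "int set"
  assumes "p \<in> B" "q \<in> B" "p \<noteq> q"
    and "\<And>d Y. 2 \<le> d \<Longrightarrow> Y \<subseteq> lattice d \<Longrightarrow> F2_iso B Y \<Longrightarrow> in_hyperplane d Y"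
  shows "fdim B = 1"
  unfolding fdim_def
proof (rule Greatest_equality)
  let ?\<phi> = "\<lambda>x i. if i = 0 then x else (0::int)"
  have "\<not> in_hyperplane 1 (?\<phi> ` B)"
  proof
    assume "in_hyperplane 1 (?\<phi> ` B)"
    then obtain c b where c: "c 0 \<noteq> 0" "\<forall>x\<in>?\<phi> ` B. lin_form 1 c x = b"
      unfolding in_hyperplane_iff_lin_form by auto
    then have "c 0 * real_of_int p = c 0 * real_of_int q"
      using assms(1,2) by (force simp: lin_form_def)
    then show False using c(1) assms(3) by simp
  qed
  moreover have "?\<phi> ` B \<subseteq> lattice 1" by (auto simp: lattice_def)
  moreover have "F2_iso B (?\<phi> ` B)"
    unfolding F2_iso_iff_F2_map using F2_map_lattice_1 by blast
  ultimately show "\<exists>Y. Y \<subseteq> lattice 1 \<and> \<not> in_hyperplane 1 Y \<and> F2_iso B Y"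
    by blast
next
  fix d
  assume "\<exists>Y. Y \<subseteq> lattice d \<and> \<not> in_hyperplane d Y \<and> F2_iso B Y"
  then obtain Y where "Y \<subseteq> lattice d" "\<not> in_hyperplane d Y" "F2_iso B Y" by blast
  then show "d \<le> 1" using assms(4)[of d Y] by linarith
qed

lemma const_if_second_diff_zero:
  fixes f :: "int \<Rightarrow> real"
  assumes second_diff: "\<And>y. u < y \<Longrightarrow> y < v \<Longrightarrow> f (y - 1) + f (y + 1) = 2 * f y"
    and "f u = f v" "u \<le> x" "x \<le> v"
  shows "f x = f u"
proof -
  define \<delta> where "\<delta> = f (u + 1) - f u"
  have step: "f (u + int n + 1) - f (u + int n) = \<delta>" if "u + int n < v" for n
    using that
  proof (induction n)
    case (Suc n)
    then have "f (u + int n + 1) - f (u + int n) = \<delta>" by simp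
    moreover have "f (u + int n + 1 - 1) + f (u + int n + 1 + 1) = 2 * f (u + int n + 1)"
      by (rule second_diff) (use Suc.prems in simp_all)
    ultimately show ?case by (simp add: algebra_simps)
  qed (simp add: \<delta>_def)
  have linear: "f (u + int n) = f u + n * \<delta>" if "u + int n \<le> v" for n
    using that
  proof (induction n)
    case (Suc n)
    then show ?case using step[of n] by (simp add: algebra_simps)
  qed simp
  show ?thesis
  proof (cases "u = v")
    case False
    have "f v = f u + nat (v - u) * \<delta>"
      using linear[of "nat (v - u)"] assms(3,4) by simp
    then have "\<delta> = 0" using False assms(2-4) by simp
    then show ?thesis
      using linear[of "nat (x - u)"] assms(3,4) by simp
  qed (use assms(3,4) in simp)
qed

lemma lin_form_const_on_interval:
  fixes \<psi> :: "int \<Rightarrow> nat \<Rightarrow> int"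
  assumes "F2_map \<psi> {u..v}" "lin_form d c (\<psi> u) = \<beta>" "lin_form d c (\<psi> v) = \<beta>" "x \<in> {u..v}"
  shows "lin_form d c (\<psi> x) = \<beta>"
proof -
  have "lin_form d c (\<psi> (y - 1)) + lin_form d c (\<psi> (y + 1)) = 2 * lin_form d c (\<psi> y)"
    if "u < y" "y < v" for y
  proof -
    have "\<psi> (y - 1) + \<psi> (y + 1) = \<psi> y + \<psi> y"
    proof -
      have "y - 1 \<in> {u..v}" "y + 1 \<in> {u..v}" "y \<in> {u..v}" using that by auto
      moreover have "(y - 1) + (y + 1) = y + y" by simp
      ultimately show ?thesis using assms(1) unfolding F2_map_def by blast
    qed
    then show ?thesis by (metis lin_form_add mult_2)
  qed
  then show ?thesis
    using const_if_second_diff_zero[of u v "\<lambda>y. lin_form d c (\<psi> y)" x] assms(2-4) by simp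
qed

lemma fdim_eq_1_if_interval_cover:
  fixes \<phi> :: "int \<Rightarrow> int" and A B :: "int set"
  assumes "finite A" "fdim A = 1" "F2_map \<phi> A" "\<phi> ` A \<subseteq> B"
    and cover: "\<And>z. z \<in> B \<Longrightarrow> \<exists>u\<in>A. \<exists>v\<in>A. z \<in> {\<phi> u..\<phi> v} \<and> {\<phi> u..\<phi> v} \<subseteq> B"
    and "p \<in> B" "q \<in> B" "p \<noteq> q"
  shows "fdim B = 1"
proof (rule fdim_eq_1I[OF assms(6-8)])
  fix d Y
  assume d: "2 \<le> d" and Y: "Y \<subseteq> lattice d" "F2_iso B Y"
  then obtain \<psi> where \<psi>: "F2_map \<psi> B" "\<psi> ` B = Y"
    unfolding F2_iso_iff_F2_map by blast
  have "F2_map (\<psi> \<circ> \<phi>) A"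
    using F2_map_comp[OF assms(3) F2_map_subset[OF \<psi>(1) assms(4)]] .
  moreover have "(\<psi> \<circ> \<phi>) ` A \<subseteq> lattice d"
    using Y(1) \<psi>(2) assms(4) by auto
  ultimately have "in_hyperplane d ((\<psi> \<circ> \<phi>) ` A)"
    using in_hyperplane_if_fdim_eq_1[OF assms(1,2) _ _ d] F2_iso_iff_F2_map by blast
  then obtain c \<beta> where c: "\<exists>i<d. c i \<noteq> 0" "\<And>x. x \<in> A \<Longrightarrow> lin_form d c (\<psi> (\<phi> x)) = \<beta>"
    unfolding in_hyperplane_iff_lin_form by auto
  have "lin_form d c (\<psi> z) = \<beta>" if z: "z \<in> B" for z
  proof -
    obtain u v where "u \<in> A" "v \<in> A" "z \<in> {\<phi> u..\<phi> v}" "{\<phi> u..\<phi> v} \<subseteq> B"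
      using cover[OF z] by blast
    then show ?thesis
      using lin_form_const_on_interval[OF F2_map_subset[OF \<psi>(1)]] c(2) by blast
  qed
  then show "in_hyperplane d Y"
    unfolding in_hyperplane_iff_lin_form using c(1) \<psi>(2) by blast
qed

section \<open>Segment decompositions\<close>

lemma Min_Max_atLeastAtMost:
  fixes a b :: int
  assumes "a \<le> b"
  shows "Min {a..b} = a" "Max {a..b} = b"
  using assms by (auto intro!: Min_eqI Max_eqI)

lemma seg_decomp_interval:
  assumes "seg_decomp A s P" "l \<in> {1..s}"
  shows "P l = {Min (P l)..Max (P l)}" "Min (P l) \<le> Max (P l)"
proof -
  obtain a b where "a \<le> b" "P l = {a..b}"
    using assms unfolding seg_decomp_def segment_def by blast
  then show "P l = {Min (P l)..Max (P l)}" "Min (P l) \<le> Max (P l)"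
    by (simp_all add: Min_Max_atLeastAtMost)
qed

lemma seg_decomp_mem_iff:
  assumes "seg_decomp A s P" "l \<in> {1..s}"
  shows "x \<in> P l \<longleftrightarrow> Min (P l) \<le> x \<and> x \<le> Max (P l)"
  using seg_decomp_interval(1)[OF assms] by (metis atLeastAtMost_iff)

lemma seg_decomp_subset: "seg_decomp A s P \<Longrightarrow> l \<in> {1..s} \<Longrightarrow> P l \<subseteq> A"
  unfolding seg_decomp_def by blast

lemma Min_Max_in_seg_decomp:
  assumes "seg_decomp A s P" "l \<in> {1..s}"
  shows "Min (P l) \<in> A" "Max (P l) \<in> A"
  using seg_decomp_interval(2)[OF assms] seg_decomp_mem_iff[OF assms] seg_decomp_subset[OF assms]
  by auto

lemma seg_decomp_Max_less_Min:
  assumes "seg_decomp A s P" "1 \<le> l" "l < l'" "l' \<le> s"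
  shows "Max (P l) < Min (P l')"
  using assms(3,4)
proof (induction l')
  case (Suc l')
  have step: "Max (P l') < Min (P (Suc l'))"
    using assms(1,2) Suc.prems unfolding seg_decomp_def by auto
  show ?case
  proof (cases "l = l'")
    case False
    then have "Max (P l) < Min (P l')" using Suc by simp
    also have "\<dots> \<le> Max (P l')"
      using seg_decomp_interval(2)[OF assms(1), of l'] Suc.prems assms(2) False by simp
    finally show ?thesis using step by simp
  qed (use step in simp)
qed simp

lemma seg_decomp_mono:
  assumes "seg_decomp A s P" "1 \<le> l" "l \<le> l'" "l' \<le> s"
  shows "Min (P l) \<le> Min (P l')" "Max (P l) \<le> Max (P l')"
  using seg_decomp_Max_less_Min[OF assms(1,2), of l'] assms
    seg_decomp_interval(2)[OF assms(1), of l] seg_decomp_interval(2)[OF assms(1), of l']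
  by (cases "l = l'"; force)+

lemma card_seg_decomp:
  assumes "seg_decomp A s P"
  shows "card A = (\<Sum>l=1..s. card (P l))"
proof -
  have "P l \<inter> P l' = {}" if "l \<in> {1..s}" "l' \<in> {1..s}" "l < l'" for l l'
  proof -
    have "Max (P l) < Min (P l')" using seg_decomp_Max_less_Min[OF assms] that by simp
    then have "{Min (P l)..Max (P l)} \<inter> {Min (P l')..Max (P l')} = {}" by auto
    then show ?thesis
      using seg_decomp_interval(1)[OF assms that(1)] seg_decomp_interval(1)[OF assms that(2)] by metis
  qed
  then have "P l \<inter> P l' = {}" if "l \<in> {1..s}" "l' \<in> {1..s}" "l \<noteq> l'" for l l'
    using that by (metis Int_commute linorder_neqE_nat)
  moreover have "finite (P l)" if "l \<in> {1..s}" for l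
    using seg_decomp_interval(1)[OF assms that] by (metis finite_atLeastAtMost_int)
  ultimately show ?thesis
    using assms unfolding seg_decomp_def by (simp add: card_UN_disjoint)
qed

lemma finite_seg_decomp: "seg_decomp A s P \<Longrightarrow> finite A"
  using seg_decomp_interval(1) unfolding seg_decomp_def by (metis finite_UN_I finite_atLeastAtMost finite_atLeastAtMost_int)

lemma card_seg_decomp_segment:
  assumes "seg_decomp A s P" "l \<in> {1..s}"
  shows "int (card (P l)) = Max (P l) - Min (P l) + 1"
proof -
  have "card (P l) = card {Min (P l)..Max (P l)}"
    using seg_decomp_interval(1)[OF assms] by (rule arg_cong)
  then show ?thesis using seg_decomp_interval(2)[OF assms] by simp
qed

definition separated_segs :: "nat \<Rightarrow> (nat \<Rightarrow> int set) \<Rightarrow> bool" where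
  "separated_segs s P \<longleftrightarrow> (\<forall>l\<in>{1..<s}. Max (P l) + 1 < Min (P (Suc l)))"

lemma separated_segs_less:
  assumes "seg_decomp A s P" "separated_segs s P" "1 \<le> l" "l < l'" "l' \<le> s"
  shows "Max (P l) + 1 < Min (P l')"
proof -
  have "Max (P l) + 1 < Min (P (Suc l))"
    using assms(2-5) unfolding separated_segs_def by simp
  also have "\<dots> \<le> Min (P l')"
    using seg_decomp_mono(1)[OF assms(1), of "Suc l" l'] assms(4,5) by simp
  finally show ?thesis .
qed

lemma Max_plus_1_notin_if_separated:
  assumes "seg_decomp A s P" "separated_segs s P" "l \<in> {1..<s}"
  shows "Max (P l) + 1 \<notin> A"
proof
  assume "Max (P l) + 1 \<in> A"
  then obtain l' where l': "l' \<in> {1..s}" "Max (P l) + 1 \<in> P l'"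
    using assms(1) unfolding seg_decomp_def by blast
  show False
  proof (cases "l' \<le> l")
    case True
    then show False
      using assms(3) l' seg_decomp_mono(2)[OF assms(1), of l' l] seg_decomp_mem_iff[OF assms(1)] by auto
  next
    case False
    then show False
      using assms(3) l' separated_segs_less[OF assms(1,2), of l l'] seg_decomp_mem_iff[OF assms(1)]
      by auto
  qed
qed

lemma nsegs_eq_if_separated:
  assumes "seg_decomp A s P" "separated_segs s P"
  shows "nsegs A = s"
  unfolding nsegs_def
proof (rule Least_equality)
  show "\<exists>P. seg_decomp A s P" using assms(1) by blast
next
  fix n
  assume "\<exists>Q. seg_decomp A n Q"
  then obtain Q where Q: "seg_decomp A n Q" by blast
  have "\<exists>m\<in>{1..n}. Min (P l) \<in> Q m" if "l \<in> {1..s}" for l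
    using Min_Max_in_seg_decomp(1)[OF assms(1) that] Q unfolding seg_decomp_def by blast
  then obtain \<sigma> where \<sigma>: "\<And>l. l \<in> {1..s} \<Longrightarrow> \<sigma> l \<in> {1..n} \<and> Min (P l) \<in> Q (\<sigma> l)"
    by metis
  have "\<sigma> l \<noteq> \<sigma> l'" if l: "l \<in> {1..s}" "l' \<in> {1..s}" "l < l'" for l l'
  proof
    assume same: "\<sigma> l = \<sigma> l'"
    have m: "\<sigma> l \<in> {1..n}" "Min (P l) \<in> Q (\<sigma> l)" "Min (P l') \<in> Q (\<sigma> l)"
      using \<sigma>[OF l(1)] \<sigma>[OF l(2)] unfolding same by auto
    \<comment> \<open>the segment of Q containing both left endpoints would contain the hole after P l\<close>
    have "Min (P l) < Max (P l) + 1" "Max (P l) + 1 < Min (P l')"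
      using seg_decomp_interval(2)[OF assms(1) l(1)] separated_segs_less[OF assms] l by auto
    then have "Max (P l) + 1 \<in> Q (\<sigma> l)"
      using m seg_decomp_mem_iff[OF Q m(1)] by auto
    then have "Max (P l) + 1 \<in> A"
      using seg_decomp_subset[OF Q m(1)] by blast
    then show False using Max_plus_1_notin_if_separated[OF assms] l by simp
  qed
  then have "inj_on \<sigma> {1..s}"
    by (metis inj_onI linorder_neqE_nat)
  then have "card {1..s} \<le> card {1..n}"
    using \<sigma> by (intro card_inj_on_le) auto
  then show "s \<le> n" by simp
qed

section \<open>Doubling a decomposition and merging two segments\<close>

definition double_segs :: "(nat \<Rightarrow> int set) \<Rightarrow> nat \<Rightarrow> int set" where
  "double_segs P l = {2 * Min (P l)..2 * Max (P l)}"

lemma Min_Max_double_segs: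
  assumes "seg_decomp A s P" "l \<in> {1..s}"
  shows "Min (double_segs P l) = 2 * Min (P l)" "Max (double_segs P l) = 2 * Max (P l)"
  using seg_decomp_interval(2)[OF assms] by (simp_all add: double_segs_def Min_Max_atLeastAtMost)

lemma seg_decomp_double_segs:
  assumes "seg_decomp A s P"
  shows "seg_decomp (\<Union>l\<in>{1..s}. double_segs P l) s (double_segs P)"
    and "separated_segs s (double_segs P)"
proof -
  have gap: "Max (double_segs P l) + 1 < Min (double_segs P (Suc l))" if "l \<in> {1..<s}" for l
    using seg_decomp_Max_less_Min[OF assms, of l "Suc l"] Min_Max_double_segs[OF assms] that by simp
  have "segment (double_segs P l)" if "l \<in> {1..s}" for l
    using seg_decomp_interval(2)[OF assms that] unfolding segment_def double_segs_def by auto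
  with gap show "seg_decomp (\<Union>l\<in>{1..s}. double_segs P l) s (double_segs P)"
    unfolding seg_decomp_def by force
  from gap show "separated_segs s (double_segs P)"
    unfolding separated_segs_def by blast
qed

definition merge_lo :: "nat \<Rightarrow> nat \<Rightarrow> nat" where
  "merge_lo j r = (if r \<le> j then r else Suc r)"

definition merge_hi :: "nat \<Rightarrow> nat \<Rightarrow> nat" where
  "merge_hi j r = (if r < j then r else Suc r)"

definition merge_at :: "nat \<Rightarrow> (nat \<Rightarrow> int set) \<Rightarrow> nat \<Rightarrow> int set" where
  "merge_at j P r = {Min (P (merge_lo j r))..Max (P (merge_hi j r))}"

lemma merge_lo_hi:
  assumes "j \<in> {1..<s}" "r \<in> {1..s - 1}"
  shows "merge_lo j r \<in> {1..s}" "merge_hi j r \<in> {1..s}" "merge_lo j r \<le> merge_hi j r"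
    and "merge_hi j r < merge_lo j (Suc r)"
  using assms by (auto simp: merge_lo_def merge_hi_def)

lemma Min_Max_merge_at:
  assumes "seg_decomp A s P" "j \<in> {1..<s}" "r \<in> {1..s - 1}"
  shows "Min (merge_at j P r) = Min (P (merge_lo j r))"
    and "Max (merge_at j P r) = Max (P (merge_hi j r))"
proof -
  note lh = merge_lo_hi[OF assms(2,3)]
  have "Min (P (merge_lo j r)) \<le> Max (P (merge_hi j r))"
    using seg_decomp_mono(1)[OF assms(1), of "merge_lo j r" "merge_hi j r"] lh
      seg_decomp_interval(2)[OF assms(1) lh(2)] by simp
  then show "Min (merge_at j P r) = Min (P (merge_lo j r))"
    and "Max (merge_at j P r) = Max (P (merge_hi j r))"
    by (simp_all add: merge_at_def Min_Max_atLeastAtMost)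
qed

lemma Union_merge_at_subset:
  assumes "seg_decomp A s P" "j \<in> {1..<s}"
  shows "(\<Union>r\<in>{1..s - 1}. merge_at j P r) \<subseteq> A \<union> {Max (P j)<..<Min (P (Suc j))}"
proof
  fix z
  assume "z \<in> (\<Union>r\<in>{1..s - 1}. merge_at j P r)"
  then obtain r where r: "r \<in> {1..s - 1}" "z \<in> merge_at j P r" by blast
  note lh = merge_lo_hi[OF assms(2) r(1)]
  note mem = seg_decomp_mem_iff[OF assms(1)]
  show "z \<in> A \<union> {Max (P j)<..<Min (P (Suc j))}"
  proof (cases "r = j")
    case True
    have j: "j \<in> {1..s}" "Suc j \<in> {1..s}" using assms(2) by auto
    have "Min (P j) \<le> z" "z \<le> Max (P (Suc j))"
      using r(2) True by (auto simp: merge_at_def merge_lo_def merge_hi_def)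
    then have "z \<in> P j \<or> z \<in> P (Suc j) \<or> z \<in> {Max (P j)<..<Min (P (Suc j))}"
      using mem[OF j(1)] mem[OF j(2)] by auto
    then show ?thesis using seg_decomp_subset[OF assms(1)] j by blast
  next
    case False
    then have "merge_lo j r = merge_hi j r" by (simp add: merge_lo_def merge_hi_def)
    then have "z \<in> P (merge_lo j r)"
      using r(2) mem[OF lh(1)] by (simp add: merge_at_def)
    then show ?thesis using seg_decomp_subset[OF assms(1) lh(1)] by blast
  qed
qed

lemma subset_Union_merge_at:
  assumes "seg_decomp A s P" "j \<in> {1..<s}"
  shows "A \<union> {Max (P j)<..<Min (P (Suc j))} \<subseteq> (\<Union>r\<in>{1..s - 1}. merge_at j P r)"
proof
  fix z
  assume "z \<in> A \<union> {Max (P j)<..<Min (P (Suc j))}"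
  then consider l where "l \<in> {1..s}" "z \<in> P l" | "z \<in> {Max (P j)<..<Min (P (Suc j))}"
    using assms(1) unfolding seg_decomp_def by blast
  then show "z \<in> (\<Union>r\<in>{1..s - 1}. merge_at j P r)"
  proof cases
    case (1 l)
    define r where "r = (if l \<le> j then l else l - 1)"
    have r: "r \<in> {1..s - 1}" "merge_lo j r \<le> l" "l \<le> merge_hi j r"
      using 1 assms(2) by (auto simp: r_def merge_lo_def merge_hi_def)
    note lh = merge_lo_hi[OF assms(2) r(1)]
    have "Min (P (merge_lo j r)) \<le> z" "z \<le> Max (P (merge_hi j r))"
      using seg_decomp_mono[OF assms(1)] seg_decomp_mem_iff[OF assms(1) 1(1)] 1 r lh
      by (meson atLeastAtMost_iff order.trans)+
    then show ?thesis using r(1) by (auto simp: merge_at_def)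
  next
    case 2
    have "Min (P j) \<le> Max (P j)" "Min (P (Suc j)) \<le> Max (P (Suc j))"
      using seg_decomp_interval(2)[OF assms(1)] assms(2) by auto
    then have "z \<in> merge_at j P j"
      using 2 by (auto simp: merge_at_def merge_lo_def merge_hi_def)
    then show ?thesis using assms(2) by auto
  qed
qed

lemma seg_decomp_merge_at:
  assumes "seg_decomp A s P" "j \<in> {1..<s}"
  shows "seg_decomp (A \<union> {Max (P j)<..<Min (P (Suc j))}) (s - 1) (merge_at j P)"
  unfolding seg_decomp_def
proof (intro conjI ballI)
  fix r
  assume r: "r \<in> {1..s - 1}"
  note lh = merge_lo_hi[OF assms(2) r]
  have "Min (P (merge_lo j r)) \<le> Max (P (merge_hi j r))"
    using seg_decomp_mono(1)[OF assms(1), of "merge_lo j r" "merge_hi j r"] lh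
      seg_decomp_interval(2)[OF assms(1) lh(2)] by simp
  then show "segment (merge_at j P r)"
    unfolding segment_def merge_at_def by blast
next
  fix r
  assume r: "r \<in> {1..<s - 1}"
  then have r': "r \<in> {1..s - 1}" "Suc r \<in> {1..s - 1}" by auto
  have "Max (P (merge_hi j r)) < Min (P (merge_lo j (Suc r)))"
    using seg_decomp_Max_less_Min[OF assms(1)] merge_lo_hi[OF assms(2) r'(1)]
      merge_lo_hi[OF assms(2) r'(2)] by simp
  then show "Max (merge_at j P r) < Min (merge_at j P (Suc r))"
    using Min_Max_merge_at[OF assms] r' by simp
qed (use Union_merge_at_subset[OF assms] subset_Union_merge_at[OF assms] in blast)

lemma separated_merge_at:
  assumes "seg_decomp A s P" "separated_segs s P" "j \<in> {1..<s}"
  shows "separated_segs (s - 1) (merge_at j P)"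
  unfolding separated_segs_def
proof
  fix r
  assume r: "r \<in> {1..<s - 1}"
  then have r': "r \<in> {1..s - 1}" "Suc r \<in> {1..s - 1}" by auto
  have "Max (P (merge_hi j r)) + 1 < Min (P (merge_lo j (Suc r)))"
    using separated_segs_less[OF assms(1,2)] merge_lo_hi[OF assms(3) r'(1)]
      merge_lo_hi[OF assms(3) r'(2)] by simp
  then show "Max (merge_at j P r) + 1 < Min (merge_at j P (Suc r))"
    using Min_Max_merge_at[OF assms(1,3)] r' by simp
qed

section \<open>The doubled set with one gap filled\<close>

lemma vol1_eq_if_consecutive:
  fixes A :: "int set"
  assumes "x \<in> A" "x + 1 \<in> A"
  shows "vol1 A = Max A - Min A + 1"
proof -
  let ?G = "Gcd ((\<lambda>a. a - Min A) ` A)"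
  have "?G dvd (x + 1 - Min A) - (x - Min A)"
    using assms by (intro dvd_diff Gcd_dvd) auto
  then have "?G = 1"
    using normalize_Gcd[of "(\<lambda>a. a - Min A) ` A"] by (simp add: normalize_int_def)
  then show ?thesis unfolding vol1_def by simp
qed

lemma vol1_eq_if_nontrivial_segment:
  assumes "seg_decomp A s P" "i \<in> {1..s}" "Min (P i) < Max (P i)"
  shows "vol1 A = Max A - Min A + 1"
proof (rule vol1_eq_if_consecutive)
  show "Min (P i) \<in> A" "Min (P i) + 1 \<in> A"
    using assms(3) seg_decomp_mem_iff[OF assms(1,2)] seg_decomp_subset[OF assms(1,2)] by auto
qed

definition fill_gap_doubled :: "nat \<Rightarrow> (nat \<Rightarrow> int set) \<Rightarrow> nat \<Rightarrow> int set" where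
  "fill_gap_doubled s P j =
     (\<Union>l\<in>{1..s}. double_segs P l) \<union> {2 * Max (P j)<..<2 * Min (P (Suc j))}"

lemma seg_decomp_fill_gap_doubled:
  assumes "seg_decomp A s P" "j \<in> {1..<s}"
  shows "seg_decomp (fill_gap_doubled s P j) (s - 1) (merge_at j (double_segs P))"
    and "nsegs (fill_gap_doubled s P j) = s - 1"
proof -
  note D = seg_decomp_double_segs[OF assms(1)]
  have "Max (double_segs P j) = 2 * Max (P j)" "Min (double_segs P (Suc j)) = 2 * Min (P (Suc j))"
    using Min_Max_double_segs[OF assms(1)] assms(2) by auto
  then show B: "seg_decomp (fill_gap_doubled s P j) (s - 1) (merge_at j (double_segs P))"
    using seg_decomp_merge_at[OF D(1) assms(2)] unfolding fill_gap_doubled_def by simp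
  show "nsegs (fill_gap_doubled s P j) = s - 1"
    using nsegs_eq_if_separated[OF B separated_merge_at[OF D assms(2)]] .
qed

lemma double_image_subset_fill_gap_doubled:
  assumes "seg_decomp A s P"
  shows "(\<lambda>x. 2 * x) ` A \<subseteq> fill_gap_doubled s P j"
proof
  fix z
  assume "z \<in> (\<lambda>x. 2 * x) ` A"
  then obtain l x where "l \<in> {1..s}" "x \<in> P l" "z = 2 * x"
    using assms unfolding seg_decomp_def by blast
  then have "z \<in> double_segs P l"
    using seg_decomp_mem_iff[OF assms] by (simp add: double_segs_def)
  then show "z \<in> fill_gap_doubled s P j"
    using \<open>l \<in> {1..s}\<close> unfolding fill_gap_doubled_def by blast
qed

lemma fill_gap_doubled_interval_cover:
  assumes "seg_decomp A s P" "j \<in> {1..<s}" "z \<in> fill_gap_doubled s P j"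
  shows "\<exists>u\<in>A. \<exists>v\<in>A. z \<in> {2 * u..2 * v} \<and> {2 * u..2 * v} \<subseteq> fill_gap_doubled s P j"
proof -
  note B = seg_decomp_fill_gap_doubled(1)[OF assms(1,2)]
  obtain r where r: "r \<in> {1..s - 1}" "z \<in> merge_at j (double_segs P) r"
    using B assms(3) unfolding seg_decomp_def by blast
  note lh = merge_lo_hi[OF assms(2) r(1)]
  let ?u = "Min (P (merge_lo j r))" and ?v = "Max (P (merge_hi j r))"
  have "merge_at j (double_segs P) r = {2 * ?u..2 * ?v}"
    using Min_Max_double_segs[OF assms(1)] lh by (simp add: merge_at_def)
  moreover have "?u \<in> A" "?v \<in> A"
    using Min_Max_in_seg_decomp[OF assms(1)] lh(1,2) by blast+
  ultimately show ?thesis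
    using r seg_decomp_subset[OF B r(1)] by auto
qed

lemma consecutive_in_fill_gap_doubled:
  assumes "seg_decomp A s P" "j \<in> {1..<s}"
  shows "2 * Max (P j) \<in> fill_gap_doubled s P j" "2 * Max (P j) + 1 \<in> fill_gap_doubled s P j"
proof -
  have "Max (P j) \<in> A"
    using Min_Max_in_seg_decomp(2)[OF assms(1)] assms(2) by simp
  then show "2 * Max (P j) \<in> fill_gap_doubled s P j"
    using double_image_subset_fill_gap_doubled[OF assms(1)] by blast
  have "Max (P j) < Min (P (Suc j))"
    using seg_decomp_Max_less_Min[OF assms(1)] assms(2) by simp
  then show "2 * Max (P j) + 1 \<in> fill_gap_doubled s P j"
    unfolding fill_gap_doubled_def by simp
qed

lemma card_le_card_fill_gap_doubled:
  assumes "seg_decomp A s P" "j \<in> {1..<s}"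
  shows "card A \<le> card (fill_gap_doubled s P j)"
proof -
  have "card A = card ((\<lambda>x. 2 * x) ` A)"
    by (simp add: card_image inj_on_def)
  also have "\<dots> \<le> card (fill_gap_doubled s P j)"
    using finite_seg_decomp[OF seg_decomp_fill_gap_doubled(1)[OF assms]]
      double_image_subset_fill_gap_doubled[OF assms(1)] by (rule card_mono)
  finally show ?thesis .
qed

lemma card_fill_gap_doubled_le:
  assumes "seg_decomp A s P" "j \<in> {1..<s}"
  shows "int (card (fill_gap_doubled s P j))
           \<le> 2 * int (card A) - int s + 2 * (Min (P (Suc j)) - Max (P j)) - 1"
proof -
  have "int (card (double_segs P l)) = 2 * int (card (P l)) - 1" if "l \<in> {1..s}" for l
    using card_seg_decomp_segment[OF assms(1) that] seg_decomp_interval(2)[OF assms(1) that]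
    by (simp add: double_segs_def)
  then have "int (card (\<Union>l\<in>{1..s}. double_segs P l)) = 2 * int (card A) - int s"
    using card_seg_decomp[OF seg_decomp_double_segs(1)[OF assms(1)]] card_seg_decomp[OF assms(1)]
    by (simp add: sum_subtractf sum_distrib_left)
  moreover have "int (card {2 * Max (P j)<..<2 * Min (P (Suc j))}) = 2 * (Min (P (Suc j)) - Max (P j)) - 1"
    using seg_decomp_Max_less_Min[OF assms(1), of j "Suc j"] assms(2) by simp
  moreover have "card (fill_gap_doubled s P j)
      \<le> card (\<Union>l\<in>{1..s}. double_segs P l) + card {2 * Max (P j)<..<2 * Min (P (Suc j))}"
    unfolding fill_gap_doubled_def by (rule card_Un_le)
  ultimately show ?thesis by linarith
qed

lemma fdim_fill_gap_doubled:
  assumes "finite A" "fdim A = 1" "seg_decomp A s P" "j \<in> {1..<s}"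
  shows "fdim (fill_gap_doubled s P j) = 1"
proof (rule fdim_eq_1_if_interval_cover[OF assms(1,2) _ _ _
      consecutive_in_fill_gap_doubled[OF assms(3,4)]])
  show "F2_map (\<lambda>x. 2 * x) A" by (rule F2_map_mult) simp
  show "(\<lambda>x. 2 * x) ` A \<subseteq> fill_gap_doubled s P j"
    by (rule double_image_subset_fill_gap_doubled[OF assms(3)])
  show "\<exists>u\<in>A. \<exists>v\<in>A. z \<in> {2 * u..2 * v} \<and> {2 * u..2 * v} \<subseteq> fill_gap_doubled s P j"
    if "z \<in> fill_gap_doubled s P j" for z
    using fill_gap_doubled_interval_cover[OF assms(3,4) that] .
qed simp

lemma vol1_fill_gap_doubled:
  assumes "seg_decomp A s P" "j \<in> {1..<s}"
  shows "vol1 (fill_gap_doubled s P j) = 2 * (Max A - Min A) + 1"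
proof -
  let ?B = "fill_gap_doubled s P j"
  have fin: "finite A" "finite ?B"
    using finite_seg_decomp assms seg_decomp_fill_gap_doubled(1) by blast+
  have B_le: "?B \<subseteq> {2 * Min A..2 * Max A}"
  proof
    fix z
    assume "z \<in> ?B"
    then obtain u v where "u \<in> A" "v \<in> A" "2 * u \<le> z" "z \<le> 2 * v"
      using fill_gap_doubled_interval_cover[OF assms] by fastforce
    moreover have "Min A \<le> u" "v \<le> Max A" using calculation(1,2) fin(1) by simp_all
    ultimately show "z \<in> {2 * Min A..2 * Max A}" by simp
  qed
  have "A \<noteq> {}"
    using fill_gap_doubled_interval_cover[OF assms consecutive_in_fill_gap_doubled(1)[OF assms]] by blast
  then have "Min A \<in> A" "Max A \<in> A" using fin(1) by simp_all
  then have "2 * Min A \<in> ?B" "2 * Max A \<in> ?B"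
    using double_image_subset_fill_gap_doubled[OF assms(1), of j] by auto
  with B_le fin(2) have "Min ?B = 2 * Min A" "Max ?B = 2 * Max A"
    by (auto intro!: Min_eqI Max_eqI)
  then show ?thesis
    using vol1_eq_if_consecutive consecutive_in_fill_gap_doubled[OF assms] by simp
qed

lemma gap_le_diam_if_not_sumset_less:
  assumes "seg_decomp A s P" "i \<in> {1..s}" "j \<in> {1..<s}"
    and "x \<in> P i" "x' \<in> P i" "y \<in> P j" "y' \<in> P (Suc j)" "x' + y' \<le> x + y"
  shows "Min (P (Suc j)) - Max (P j) \<le> Max (P i) - Min (P i)"
proof -
  have "j \<in> {1..s}" "Suc j \<in> {1..s}" using assms(3) by auto
  then show ?thesis
    using assms(4-8) seg_decomp_mem_iff[OF assms(1) assms(2)] seg_decomp_mem_iff[OF assms(1)] by fastforce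
qed

lemma card_seg_decomp_ge:
  assumes "seg_decomp A s P" "i \<in> {1..s}"
  shows "Max (P i) - Min (P i) + int s \<le> int (card A)"
proof -
  have "int (card A) = int (card (P i)) + (\<Sum>l\<in>{1..s} - {i}. int (card (P l)))"
    using card_seg_decomp[OF assms(1)] assms(2) by (simp add: sum.remove)
  moreover have "(\<Sum>l\<in>{1..s} - {i}. int (card (P l))) \<ge> (\<Sum>l\<in>{1..s} - {i}. 1)"
    using card_seg_decomp_segment[OF assms(1)] seg_decomp_interval(2)[OF assms(1)]
    by (intro sum_mono) fastforce
  ultimately show ?thesis
    using card_seg_decomp_segment[OF assms] assms(2) by simp
qed

theorem lemma3p1:
  fixes A :: "int set" and s :: nat and P :: "nat \<Rightarrow> int set"
  assumes "finite A"
    and "fdim A = 1"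
    and "seg_decomp A s P"
    and "int s \<le> int (card A) - 1"
    and "\<forall>B :: int set. finite B \<and> fdim B = 1 \<and> nsegs B = s - 1 \<and>
            int s - 1 \<le> int (card B) - 1 \<longrightarrow>
            vol1 B \<le> 2 ^ (s - 2) * (int (card B) - int s + 1) + 1"
    and "vol1 A > 2 ^ (s - 1) * (int (card A) - int s) + 1"
  shows "\<forall>i\<in>{1..s}. \<forall>j\<in>{1..<s}. \<forall>x\<in>P i. \<forall>y\<in>P j. \<forall>x'\<in>P i. \<forall>y'\<in>P (Suc j).
           x + y < x' + y'"
proof (rule ccontr)
  assume "\<not> ?thesis"
  then obtain i j x y x' y' where ij: "i \<in> {1..s}" "j \<in> {1..<s}"
    and xy: "x \<in> P i" "y \<in> P j" "x' \<in> P i" "y' \<in> P (Suc j)" "x' + y' \<le> x + y"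
    by (auto simp: not_less)
  let ?B = "fill_gap_doubled s P j"
  have g_le: "Min (P (Suc j)) - Max (P j) \<le> Max (P i) - Min (P i)"
    using gap_le_diam_if_not_sumset_less[OF assms(3) ij xy(1,3,2,4,5)] .
  moreover have "Max (P j) < Min (P (Suc j))"
    using seg_decomp_Max_less_Min[OF assms(3), of j "Suc j"] ij(2) by simp
  ultimately have vol_A: "vol1 A = Max A - Min A + 1"
    using vol1_eq_if_nontrivial_segment[OF assms(3) ij(1)] by simp
  have "vol1 ?B \<le> 2 ^ (s - 2) * (int (card ?B) - int s + 1) + 1"
    using assms(4,5) card_le_card_fill_gap_doubled[OF assms(3) ij(2)]
      fdim_fill_gap_doubled[OF assms(1-3) ij(2)] seg_decomp_fill_gap_doubled[OF assms(3) ij(2)]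
      finite_seg_decomp by force
  moreover have "int (card ?B) - int s + 1 \<le> 4 * (int (card A) - int s)"
    using card_fill_gap_doubled_le[OF assms(3) ij(2)] g_le card_seg_decomp_ge[OF assms(3) ij(1)]
    by (simp add: algebra_simps)
  ultimately have "2 * (Max A - Min A) \<le> 2 ^ (s - 2) * (4 * (int (card A) - int s))"
    using vol1_fill_gap_doubled[OF assms(3) ij(2)] by (smt (verit) mult_left_mono zero_le_power)
  moreover have "(2::int) ^ (s - 1) = 2 * 2 ^ (s - 2)"
    using ij(2) by (simp add: Suc_diff_Suc numeral_2_eq_2 flip: power_Suc)
  ultimately show False
    using assms(6) vol_A by (simp add: algebra_simps)
qed

end
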